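(* Let $\mathfrak{B}$ be a finite cyclic group, of order at least $3$, of invertible diagonal $2\times2$ complex matrices, containing three pairwise linearly independent matrices. Let $n\ge3$ and let $F$ be a Boolean function of arity $2n$ such that every function of arity less than $2n$ realizable by a gadget of $\#(\{F\}\cup\mathfrak{B})$ lies in $\lambda\langle\mathfrak{B}\rangle$. Then either $F$ is the zero function, or there exist four distinct variables $x,y,z,w$ of $F$ such that $F^{xyzw}_{0000}$ is a nonzero function.
   Context: Matrices in $\mathfrak{B}$ are binary functions $M(u,v)=M_{uv}$. $\#\mathcal{G}$: input a finite multigraph whose vertices carry functions from $\mathcal{G}$ of arity equal to the degree (edges act as binary equality); output the sum over $\{0,1\}$-edge assignments of the product of vertex functions. Gadgets are such networks with dangling edges; realizable functions are their functions. $\langle\mathfrak{B}\rangle$ is the set of functions $x\mapsto\prod_{j=1}^m M_j(x_{\pi(2j-1)},x_{\pi(2j)})$ with $\pi$ a permutation of the $2m$ variables and $M_j\in\mathfrak{B}$; $\lambda\langle\mathfrak{B}\rangle=\{\lambda f:\lambda\in\mathbb{C},f\in\langle\mathfrak{B}\rangle\}$. $F^{xyzw}_{0000}$ is the arity-$(2n-4)$ function obtained from $F$ by fixing $x=y=z=w=0$. *)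

theory Defs
  imports Complex_Main
begin

text \<open>Boolean functions: a function of arity k is a map bool list => complex,
  only its values on lists of length k matter (False = 0, True = 1).
  A signature is a pair (arity, function).\<close>

type_synonym bfun = "bool list \<Rightarrow> complex"
type_synonym sig = "nat \<times> bfun"

text \<open>2x2 matrices as binary functions M(u,v) = M_uv.\<close>
type_synonym mat2 = "bool \<Rightarrow> bool \<Rightarrow> complex"

definition mmult :: "mat2 \<Rightarrow> mat2 \<Rightarrow> mat2" where
  "mmult A B = (\<lambda>u v. A u False * B False v + A u True * B True v)"

definition mone :: mat2 where
  "mone = (\<lambda>u v. if u = v then 1 else 0)"

fun mpow :: "mat2 \<Rightarrow> nat \<Rightarrow> mat2" where
  "mpow g 0 = mone"
| "mpow g (Suc k) = mmult g (mpow g k)"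

definition diag_invertible :: "mat2 \<Rightarrow> bool" where
  "diag_invertible M \<longleftrightarrow> M False True = 0 \<and> M True False = 0 \<and>
     M False False \<noteq> 0 \<and> M True True \<noteq> 0"

definition lin_indep2 :: "mat2 \<Rightarrow> mat2 \<Rightarrow> bool" where
  "lin_indep2 A B \<longleftrightarrow>
     (\<forall>a b::complex. (\<forall>u v. a * A u v + b * B u v = 0) \<longrightarrow> a = 0 \<and> b = 0)"

definition mat_sig :: "mat2 \<Rightarrow> sig" where
  "mat_sig M = (2, \<lambda>xs. M (xs ! 0) (xs ! 1))"

definition in_lamB :: "mat2 set \<Rightarrow> nat \<Rightarrow> bfun \<Rightarrow> bool" where
  "in_lamB B k f \<longleftrightarrow>
    (\<exists>m (lam::complex) \<pi> Ms. k = 2 * m \<and> bij_betw \<pi> {..<2*m} {..<2*m} \<and>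
       length Ms = m \<and> set Ms \<subseteq> B \<and>
       (\<forall>xs. length xs = k \<longrightarrow>
          f xs = lam * (\<Prod>j<m. (Ms ! j) (xs ! \<pi> (2*j)) (xs ! \<pi> (2*j+1)))))"

text \<open>Vertices carry signatures; each vertex v has ports 0..arity-1.
  Every port is attached to a wire. Wires 0..<gdang are the dangling edges
  (the i-th dangling edge is the i-th input variable) and each is attached to
  exactly one port; wires gdang..<gdang+gint are internal edges, each attached
  to exactly two ports (self-loops and parallel edges allowed: multigraph).\<close>
record gadget =
  gverts :: "sig list"
  gdang :: nat
  gint :: nat
  gwire :: "nat \<Rightarrow> nat \<Rightarrow> nat"

definition ports :: "gadget \<Rightarrow> (nat \<times> nat) set" where
  "ports g = {(v, i). v < length (gverts g) \<and> i < fst (gverts g ! v)}"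

definition wire_ports :: "gadget \<Rightarrow> nat \<Rightarrow> (nat \<times> nat) set" where
  "wire_ports g j = {p \<in> ports g. gwire g (fst p) (snd p) = j}"

definition gadget_wf :: "sig set \<Rightarrow> gadget \<Rightarrow> bool" where
  "gadget_wf G g \<longleftrightarrow>
     set (gverts g) \<subseteq> G \<and>
     (\<forall>p \<in> ports g. gwire g (fst p) (snd p) < gdang g + gint g) \<and>
     (\<forall>j < gdang g. card (wire_ports g j) = 1) \<and>
     (\<forall>j. gdang g \<le> j \<and> j < gdang g + gint g \<longrightarrow> card (wire_ports g j) = 2)"

definition gadget_fn :: "gadget \<Rightarrow> bfun" where
  "gadget_fn g xs =
     (\<Sum>ys \<in> {ys. length ys = gint g}.
        \<Prod>v < length (gverts g).
          snd (gverts g ! v) (map (\<lambda>i. (xs @ ys) ! gwire g v i) [0..<fst (gverts g ! v)]))"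

end

theory Submission
  imports Defs
begin

(* Suppose F is nonzero but vanishes on every input with four zeros, and pick a nonzero input x
   with as many zeros as possible. It has at most three zeros, so (as 2n >= 6) it has ones at two
   positions i and j. Joining ports i and j of F by a self-loop gives a gadget of arity 2n - 2 whose
   function is f(y) = F(y with 0 at i, j) + F(y with 1 at i, j). By hypothesis f lies in lambda<B>;
   as the matrices of B are invertible and diagonal, such a function vanishes everywhere once it
   vanishes at the all-zero input, and f does, since both terms then have at least 2n - 2 >= 4
   zeros. But at x with positions i, j removed, f is 0 + F(x) /= 0 by the maximality of x. *)

lemma nth_nths_card:
  assumes "p \<in> I" "p < length xs"
  shows "nths xs I ! card {q \<in> I. q < p} = xs ! p"
  using assms
proof (induction xs arbitrary: I p)
  case Nil then show ?case by simp
next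
  case (Cons x xs)
  show ?case
  proof (cases p)
    case 0
    then have "{q \<in> I. q < p} = {}" by auto
    with 0 Cons.prems show ?thesis by (simp add: nths_Cons)
  next
    case (Suc p')
    have IH: "nths xs {k. Suc k \<in> I} ! card {q \<in> {k. Suc k \<in> I}. q < p'} = xs ! p'"
      using Cons.IH[of p' "{k. Suc k \<in> I}"] Cons.prems Suc by simp
    show ?thesis
    proof (cases "0 \<in> I")
      case True
      then have "card {q \<in> I. q < p} = Suc (card {k. Suc k \<in> I \<and> k < p'})"
        using Suc card_less_Suc[of I p'] by simp
      then show ?thesis using IH True Suc by (simp add: nths_Cons)
    next
      case False
      then have "card {q \<in> I. q < p} = card {k. Suc k \<in> I \<and> k < p'}"
        using Suc card_less_Suc2[of I p'] by simp
      then show ?thesis using IH False Suc by (simp add: nths_Cons)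
    qed
  qed
qed

lemma nths_replicate: "nths (replicate n x) I = replicate (card {k. k < n \<and> k \<in> I}) x"
  by (rule replicate_eqI) (auto simp: length_nths dest: in_set_nthsD)

lemma length_nths_remove_two:
  assumes "length xs = N" "i < N" "j < N" "i \<noteq> j"
  shows "length (nths xs (- {i, j})) = N - 2"
proof -
  have "{k. k < N \<and> k \<in> - {i, j}} = {..<N} - {i, j}"
    by auto
  then show ?thesis
    using assms by (simp add: length_nths card_Diff_subset)
qed

lemma bij_betw_card_less:
  fixes A :: "nat set"
  assumes "finite A"
  shows "bij_betw (\<lambda>p. card {q \<in> A. q < p}) A {..<card A}"
proof -
  let ?rank = "\<lambda>p. card {q \<in> A. q < p}"
  have "strict_mono_on A ?rank"
    by (rule strict_mono_onI) (auto intro!: psubset_card_mono simp: assms)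
  then have inj: "inj_on ?rank A"
    by (rule strict_mono_on_imp_inj_on)
  have "?rank ` A \<subseteq> {..<card A}"
    using assms by (auto intro!: psubset_card_mono)
  moreover have "card (?rank ` A) = card A"
    using inj by (rule card_image)
  ultimately have "?rank ` A = {..<card A}"
    by (simp add: card_subset_eq)
  with inj show ?thesis
    by (simp add: bij_betw_def)
qed

lemma in_lamB_eq_0_if_eq_0_at_zeros:
  assumes "in_lamB B k f" "\<forall>M\<in>B. diag_invertible M" "f (replicate k False) = 0" "length xs = k"
  shows "f xs = 0"
proof -
  obtain m lam \<pi> Ms where k: "k = 2 * m" and bij: "bij_betw \<pi> {..<2 * m} {..<2 * m}"
    and len: "length Ms = m" and sub: "set Ms \<subseteq> B"
    and f: "\<And>xs. length xs = k \<Longrightarrow>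
              f xs = lam * (\<Prod>j<m. (Ms ! j) (xs ! \<pi> (2 * j)) (xs ! \<pi> (2 * j + 1)))"
    using assms(1) unfolding in_lamB_def by blast
  have "(Ms ! j) False False \<noteq> 0" if "j < m" for j
    using that sub len assms(2) unfolding diag_invertible_def by (metis nth_mem subsetD)
  moreover have "\<pi> (2 * j) < k" "\<pi> (2 * j + 1) < k" if "j < m" for j
    using that bij k unfolding bij_betw_def by auto
  ultimately have "(\<Prod>j<m. (Ms ! j) (replicate k False ! \<pi> (2 * j))
                              (replicate k False ! \<pi> (2 * j + 1))) \<noteq> 0"
    by simp
  with f assms(3) have "lam = 0"
    by simp
  with f assms(4) show ?thesis
    by simp
qed

(* The remaining ports become the dangling edges in increasing order, so that the gadget applied
   to nths xs (- {i, j}) reads xs off the ports other than i and j. *)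
definition loop_wire :: "nat \<Rightarrow> nat \<Rightarrow> nat \<Rightarrow> nat \<Rightarrow> nat" where
  "loop_wire N i j p = (if p = i \<or> p = j then N - 2 else card {q \<in> {..<N} - {i, j}. q < p})"

definition self_loop_gadget :: "nat \<Rightarrow> bfun \<Rightarrow> nat \<Rightarrow> nat \<Rightarrow> gadget" where
  "self_loop_gadget N F i j =
     \<lparr>gverts = [(N, F)], gdang = N - 2, gint = 1, gwire = (\<lambda>_. loop_wire N i j)\<rparr>"

lemma ports_self_loop_gadget: "ports (self_loop_gadget N F i j) = {(0, p) | p. p < N}"
  unfolding ports_def self_loop_gadget_def by auto

lemma card_wire_ports_self_loop_gadget:
  "card (wire_ports (self_loop_gadget N F i j) k) = card {p. p < N \<and> loop_wire N i j p = k}"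
proof -
  have "wire_ports (self_loop_gadget N F i j) k = Pair 0 ` {p. p < N \<and> loop_wire N i j p = k}"
    unfolding wire_ports_def ports_self_loop_gadget by (auto simp: self_loop_gadget_def)
  then show ?thesis
    by (simp add: card_image inj_on_def)
qed

lemma loop_wire_loop [simp]: "loop_wire N i j i = N - 2" "loop_wire N i j j = N - 2"
  by (simp_all add: loop_wire_def)

lemma bij_betw_loop_wire:
  assumes "i < N" "j < N" "i \<noteq> j"
  shows "bij_betw (loop_wire N i j) ({..<N} - {i, j}) {..<N - 2}"
proof -
  let ?A = "{..<N} - {i, j}"
  have "card ?A = N - 2"
    using assms by (simp add: card_Diff_subset)
  then have "bij_betw (\<lambda>p. card {q \<in> ?A. q < p}) ?A {..<N - 2}"
    using bij_betw_card_less[of ?A] by simp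
  then show ?thesis
    by (rule bij_betw_cong[THEN iffD1, rotated]) (simp add: loop_wire_def)
qed

lemma gadget_wf_self_loop_gadget:
  assumes "(N, F) \<in> G" "i < N" "j < N" "i \<noteq> j"
  shows "gadget_wf G (self_loop_gadget N F i j)"
proof -
  let ?A = "{..<N} - {i, j}"
  note bij = bij_betw_loop_wire[OF assms(2-4)]
  have dangling_lt: "loop_wire N i j p < N - 2" if "p < N" "p \<noteq> i" "p \<noteq> j" for p
    using bij_betw_apply[OF bij] that by simp
  have dangling: "card {p. p < N \<and> loop_wire N i j p = k} = 1" if "k < N - 2" for k
  proof -
    have "k \<in> loop_wire N i j ` ?A"
      using bij_betw_imp_surj_on[OF bij] that by simp
    then obtain p where p: "p \<in> ?A" "loop_wire N i j p = k"
      by blast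
    have "p' = p" if "p' < N" "loop_wire N i j p' = k" for p'
    proof -
      have "p' \<in> ?A"
        using that \<open>k < N - 2\<close> by auto
      then show ?thesis
        using p that inj_onD[OF bij_betw_imp_inj_on[OF bij]] by metis
    qed
    then have "{p. p < N \<and> loop_wire N i j p = k} = {p}"
      using p by blast
    then show ?thesis by simp
  qed
  have loop: "card {p. p < N \<and> loop_wire N i j p = k} = 2"
    if "N - 2 \<le> k" "k < N - 1" for k
  proof -
    have "k = N - 2"
      using that by linarith
    moreover have "{p. p < N \<and> loop_wire N i j p = N - 2} = {i, j}"
      using assms dangling_lt by fastforce
    ultimately show ?thesis
      using assms by simp
  qed
  have wires: "loop_wire N i j p < N - 1" if "p < N" for p
    using that assms dangling_lt[of p] by (cases "p = i \<or> p = j") auto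
  have "N - 2 + 1 = N - 1"
    using assms by linarith
  then show ?thesis
    unfolding gadget_wf_def card_wire_ports_self_loop_gadget ports_self_loop_gadget
    using assms dangling loop wires
    by (auto simp: self_loop_gadget_def)
qed

lemma gadget_fn_self_loop_gadget:
  assumes "length xs = N" "i < N" "j < N" "i \<noteq> j"
  shows "gadget_fn (self_loop_gadget N F i j) (nths xs (- {i, j})) =
           F (xs[i := False, j := False]) + F (xs[i := True, j := True])"
proof -
  let ?L = "nths xs (- {i, j})"
  have len: "length ?L = N - 2"
    using assms by (rule length_nths_remove_two)
  have wire_eval: "map (\<lambda>p. (?L @ [b]) ! loop_wire N i j p) [0..<N] = xs[i := b, j := b]" for b
  proof (rule nth_equalityI)
    fix p assume "p < length (map (\<lambda>p. (?L @ [b]) ! loop_wire N i j p) [0..<N])"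
    then have "p < N" by simp
    show "map (\<lambda>p. (?L @ [b]) ! loop_wire N i j p) [0..<N] ! p = xs[i := b, j := b] ! p"
    proof (cases "p = i \<or> p = j")
      case True
      then show ?thesis
        using assms len by (auto simp: nth_append)
    next
      case False
      then have "loop_wire N i j p = card {q \<in> - {i, j}. q < p}"
        using \<open>p < N\<close> unfolding loop_wire_def by (auto intro!: arg_cong[where f = card])
      moreover have "loop_wire N i j p < N - 2"
        using bij_betw_apply[OF bij_betw_loop_wire[OF assms(2-4)]] \<open>p < N\<close> False by simp
      ultimately show ?thesis
        using False \<open>p < N\<close> assms len nth_nths_card[of p "- {i, j}" xs]
        by (simp add: nth_append)
    qed
  qed (simp add: assms)
  have "{ys. length ys = Suc 0} = {[False], [True]}"
    by (auto simp: length_Suc_conv)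
  then show ?thesis
    by (simp add: gadget_fn_def self_loop_gadget_def wire_eval)
qed

lemma self_loop_sum_eq_0_if_eq_0_at_zeros:
  assumes "in_lamB B (N - 2) (gadget_fn (self_loop_gadget N F i j))" "\<forall>M\<in>B. diag_invertible M"
    and "i < N" "j < N" "i \<noteq> j" "length ys = N"
    and "F (replicate N False) + F ((replicate N False)[i := True, j := True]) = 0"
  shows "F (ys[i := False, j := False]) + F (ys[i := True, j := True]) = 0"
proof -
  let ?g = "self_loop_gadget N F i j"
  have "nths (replicate N False) (- {i, j}) = replicate (N - 2) False"
    using length_nths_remove_two[of "replicate N False" N i j] assms(3-5)
    by (simp add: nths_replicate length_nths)
  moreover have "(replicate N False)[i := False, j := False] = replicate N False"
    using list_update_id[of "replicate N False" i] list_update_id[of "replicate N False" j] assms(3,4)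
    by simp
  ultimately have "gadget_fn ?g (replicate (N - 2) False) = 0"
    using gadget_fn_self_loop_gadget[of "replicate N False" N i j F] assms(3-5,7) by simp
  then have "gadget_fn ?g (nths ys (- {i, j})) = 0"
    using in_lamB_eq_0_if_eq_0_at_zeros assms(1,2) length_nths_remove_two assms(3-6) by blast
  then show ?thesis
    using gadget_fn_self_loop_gadget assms(3-6) by simp
qed

definition zero_positions :: "bool list \<Rightarrow> nat set" where
  "zero_positions xs = {k. k < length xs \<and> \<not> xs ! k}"

lemma card_zero_positions_le: "card (zero_positions xs) \<le> length xs"
  unfolding zero_positions_def by (rule card_mono[of "{..<length xs}", simplified]) auto

lemma zero_positions_replicate_False [simp]: "zero_positions (replicate N False) = {..<N}"
  by (auto simp: zero_positions_def)

lemma card_zero_positions_set_two: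
  assumes "i < N" "j < N" "i \<noteq> j"
  shows "card (zero_positions ((replicate N False)[i := True, j := True])) = N - 2"
proof -
  have "zero_positions ((replicate N False)[i := True, j := True]) = {..<N} - {i, j}"
    using assms by (auto simp: zero_positions_def nth_list_update)
  then show ?thesis
    using assms by (simp add: card_Diff_subset)
qed

lemma card_zero_positions_clear_two:
  assumes "i < length xs" "j < length xs" "i \<noteq> j" "xs ! i" "xs ! j"
  shows "card (zero_positions (xs[i := False, j := False])) = card (zero_positions xs) + 2"
proof -
  have "zero_positions (xs[i := False, j := False]) = insert i (insert j (zero_positions xs))"
    using assms by (auto simp: zero_positions_def nth_list_update)
  moreover have "i \<notin> zero_positions xs" "j \<notin> zero_positions xs"
    using assms by (auto simp: zero_positions_def)
  ultimately show ?thesis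
    using assms by (simp add: zero_positions_def)
qed

lemma obtain_two_ones:
  assumes "card (zero_positions xs) + 2 \<le> length xs"
  obtains i j where "i < length xs" "j < length xs" "i \<noteq> j" "xs ! i" "xs ! j"
proof -
  let ?ones = "{k. k < length xs \<and> xs ! k}"
  have "zero_positions xs \<union> ?ones = {..<length xs}" "zero_positions xs \<inter> ?ones = {}"
    by (auto simp: zero_positions_def)
  then have "card (zero_positions xs) + card ?ones = length xs"
    by (metis card_Un_disjoint card_lessThan finite_Un finite_lessThan)
  then have "2 \<le> card ?ones"
    using assms by linarith
  then show ?thesis
    using that by (auto simp: card_le_Suc_iff numeral_eq_Suc)
qed

lemma obtain_four_distinct:
  assumes "4 \<le> card S"
  obtains x y z w where "x \<in> S" "y \<in> S" "z \<in> S" "w \<in> S" "distinct [x, y, z, w]"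
  using assms by (auto simp: card_le_Suc_iff numeral_eq_Suc)

lemma ex_nonzero_with_four_zeros:
  fixes F :: bfun
  assumes "length xs = N" "F xs \<noteq> 0" "6 \<le> N"
    and self_loops: "\<And>i j ys. i < N \<Longrightarrow> j < N \<Longrightarrow> i \<noteq> j \<Longrightarrow> length ys = N \<Longrightarrow>
        F (replicate N False) + F ((replicate N False)[i := True, j := True]) = 0 \<Longrightarrow>
        F (ys[i := False, j := False]) + F (ys[i := True, j := True]) = 0"
  shows "\<exists>ys. length ys = N \<and> F ys \<noteq> 0 \<and> 4 \<le> card (zero_positions ys)"
proof (rule ccontr)
  assume "\<not> ?thesis"
  then have few_zeros: "F ys = 0" if "length ys = N" "4 \<le> card (zero_positions ys)" for ys
    using that by auto
  obtain x where x: "length x = N" "F x \<noteq> 0"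
    and max: "\<And>y. length y = N \<Longrightarrow> F y \<noteq> 0 \<Longrightarrow> card (zero_positions y) \<le> card (zero_positions x)"
    using ex_has_greatest_nat[where P = "\<lambda>y. length y = N \<and> F y \<noteq> 0"
        and f = "\<lambda>y. card (zero_positions y)" and b = "Suc N"] assms(1,2)
    by (metis card_zero_positions_le le_imp_less_Suc)
  have "card (zero_positions x) \<le> 3"
    using few_zeros x by fastforce
  then have "card (zero_positions x) + 2 \<le> length x"
    using x(1) assms(3) by linarith
  then obtain i j where ij: "i < length x" "j < length x" "i \<noteq> j" "x ! i" "x ! j"
    by (rule obtain_two_ones)
  have "F (replicate N False) = 0" "F ((replicate N False)[i := True, j := True]) = 0"
    using few_zeros card_zero_positions_set_two[of i N j] ij x(1) assms(3) by simp_all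
  then have "F (x[i := False, j := False]) + F (x[i := True, j := True]) = 0"
    using self_loops ij x by simp
  moreover have "F (x[i := False, j := False]) = 0"
  proof (rule ccontr)
    assume "F (x[i := False, j := False]) \<noteq> 0"
    then have "card (zero_positions (x[i := False, j := False])) \<le> card (zero_positions x)"
      using max x(1) by simp
    then show False
      using card_zero_positions_clear_two[OF ij] by simp
  qed
  moreover have "x[i := True, j := True] = x"
    using ij by (metis list_update_id)
  ultimately show False
    using x by simp
qed

theorem mainTheorem14:
  fixes B :: "mat2 set" and F :: bfun and n :: nat
  assumes fin: "finite B"
    and cyc: "\<exists>g. B = range (mpow g)"
    and diag: "\<forall>M \<in> B. diag_invertible M"
    and ord3: "card B \<ge> 3"
    and indep: "\<exists>M1 \<in> B. \<exists>M2 \<in> B. \<exists>M3 \<in> B.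
                  lin_indep2 M1 M2 \<and> lin_indep2 M1 M3 \<and> lin_indep2 M2 M3"
    and n3: "n \<ge> 3"
    and closed: "\<forall>g. gadget_wf (insert (2 * n, F) (mat_sig ` B)) g \<and> gdang g < 2 * n
                   \<longrightarrow> in_lamB B (gdang g) (gadget_fn g)"
  shows "(\<forall>xs. length xs = 2 * n \<longrightarrow> F xs = 0) \<or>
         (\<exists>x y z w. x < 2 * n \<and> y < 2 * n \<and> z < 2 * n \<and> w < 2 * n \<and>
            distinct [x, y, z, w] \<and>
            (\<exists>xs. length xs = 2 * n \<and> \<not> xs ! x \<and> \<not> xs ! y \<and> \<not> xs ! z \<and> \<not> xs ! w
                  \<and> F xs \<noteq> 0))"
proof -
  let ?N = "2 * n"
  have self_loops: "F (ys[i := False, j := False]) + F (ys[i := True, j := True]) = 0"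
    if "i < ?N" "j < ?N" "i \<noteq> j" "length ys = ?N"
      and "F (replicate ?N False) + F ((replicate ?N False)[i := True, j := True]) = 0"
    for i j ys
  proof (rule self_loop_sum_eq_0_if_eq_0_at_zeros[OF _ diag that])
    let ?g = "self_loop_gadget ?N F i j"
    have "gadget_wf (insert (2 * n, F) (mat_sig ` B)) ?g"
      using that by (intro gadget_wf_self_loop_gadget) auto
    moreover have "gdang ?g = ?N - 2" "?N - 2 < ?N"
      using n3 by (simp_all add: self_loop_gadget_def)
    ultimately show "in_lamB B (?N - 2) (gadget_fn ?g)"
      using closed by metis
  qed
  show ?thesis
  proof (cases "\<forall>xs. length xs = ?N \<longrightarrow> F xs = 0")
    case False
    then obtain xs where "length xs = ?N" "F xs \<noteq> 0"
      by blast
    then obtain ys where ys: "length ys = ?N" "F ys \<noteq> 0" "4 \<le> card (zero_positions ys)"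
      using ex_nonzero_with_four_zeros[OF _ _ _ self_loops] n3 by fastforce
    obtain x y z w where "x \<in> zero_positions ys" "y \<in> zero_positions ys"
      "z \<in> zero_positions ys" "w \<in> zero_positions ys" "distinct [x, y, z, w]"
      by (rule obtain_four_distinct[OF ys(3)])
    then show ?thesis
      using ys(1,2) by (simp add: zero_positions_def) blast
  qed simp
qed

end
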